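(* Let $a:\mathbb{R}_{\ge 0}\to\mathbb{R}_{>0}$ be a continuous positive function converging to a constant $a^*>0$ at rate at least $\rho_a>0$. Consider the system \[ \dot y=y\bigl(1-a(t)y\bigr),\qquad \dot x=1-yz,\qquad \dot z=z(1-yz), \] with initial values $y(0)>0$, $z(0)>0$ and $x(0)=\ln z(0)$ (and assume the solution exists for all $t\ge0$). Then $y(t)\to 1/a^*$, $z(t)\to a^*$, $x(t)=\ln z(t)$ for all $t\ge 0$, and $x(t)\to\ln a^*$ at rate at least $\min\{\rho_a,1\}$. *)

theory Defs
  imports "HOL-Analysis.Analysis"
begin

text \<open>A function f on [0,\<infinity>) converges to L at (exponential) rate at least \<rho>:
  for every \<rho>' < \<rho> one has |f t - L| \<le> C e^{-\<rho>' t} for all t \<ge> 0,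
  i.e. limsup (1/t) ln |f t - L| \<le> -\<rho>.\<close>
definition converges_at_rate :: "(real \<Rightarrow> real) \<Rightarrow> real \<Rightarrow> real \<Rightarrow> bool" where
  "converges_at_rate f L \<rho> \<longleftrightarrow>
     (\<forall>\<rho>'<\<rho>. \<exists>C. \<forall>t\<ge>0. \<bar>f t - L\<bar> \<le> C * exp (- \<rho>' * t))"

end

theory Submission
  imports Defs
begin

text \<open>Both \<open>y\<close> and \<open>z\<close> solve logistic equations \<open>f' = f (1 - c f)\<close>, with coefficient \<open>c = a\<close>
  and \<open>c = y\<close> respectively. Such an \<open>f\<close> stays positive, and \<open>u = 1 / f\<close> solves the linear relaxation
  equation \<open>u' = c - u\<close>. Multiplying \<open>w' = b - w\<close> by \<open>e\<^sup>t\<close> gives \<open>(e\<^sup>t w)' = e\<^sup>t b\<close>, so a relaxation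
  equation passes the exponential rate at which its forcing term \<open>b\<close> converges on to \<open>w\<close>, capped at
  the relaxation rate 1. Inversion and logarithm preserve such rates along positive functions with
  positive limits, since these are bounded away from 0. Hence \<open>y \<rightarrow> 1 / a\<^sup>*\<close> at rate \<open>min \<rho>\<^sub>a 1\<close>,
  then \<open>z \<rightarrow> a\<^sup>*\<close> at the same rate, and \<open>x = ln z\<close> because \<open>x - ln z\<close> has derivative 0 and
  vanishes at 0.\<close>

lemma DERIV_nonneg_imp_increasing_within:
  fixes f :: "real \<Rightarrow> real"
  assumes "a \<le> b" and "{a..b} \<subseteq> S"
    and deriv: "\<And>x. x \<in> {a..b} \<Longrightarrow> (f has_real_derivative f' x) (at x within S)"
    and nonneg: "\<And>x. x \<in> {a..b} \<Longrightarrow> 0 \<le> f' x"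
  shows "f a \<le> f b"
proof (rule DERIV_nonneg_imp_increasing_open[OF \<open>a \<le> b\<close>])
  have deriv_Icc: "(f has_real_derivative f' x) (at x within {a..b})" if "x \<in> {a..b}" for x
    using DERIV_subset[OF deriv[OF that] \<open>{a..b} \<subseteq> S\<close>] .
  then show "continuous_on {a..b} f"
    by (rule DERIV_continuous_on)
  fix x assume "a < x" "x < b"
  then have "DERIV f x :> f' x"
    using deriv_Icc[of x] by (simp add: at_within_Icc_at)
  then show "\<exists>y. DERIV f x :> y \<and> 0 \<le> y"
    using nonneg[of x] \<open>a < x\<close> \<open>x < b\<close> by auto
qed

lemma abs_diff_le_of_DERIV_bound:
  fixes f \<phi> :: "real \<Rightarrow> real"
  assumes "a \<le> b" and "{a..b} \<subseteq> S"
    and f': "\<And>x. x \<in> {a..b} \<Longrightarrow> (f has_real_derivative f' x) (at x within S)"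
    and \<phi>': "\<And>x. x \<in> {a..b} \<Longrightarrow> (\<phi> has_real_derivative \<phi>' x) (at x within S)"
    and bound: "\<And>x. x \<in> {a..b} \<Longrightarrow> \<bar>f' x\<bar> \<le> \<phi>' x"
  shows "\<bar>f b - f a\<bar> \<le> \<phi> b - \<phi> a"
proof -
  have "\<phi> a - f a \<le> \<phi> b - f b"
  proof (rule DERIV_nonneg_imp_increasing_within[OF \<open>a \<le> b\<close> \<open>{a..b} \<subseteq> S\<close>,
        where f = "\<lambda>x. \<phi> x - f x" and f' = "\<lambda>x. \<phi>' x - f' x"])
    fix x assume "x \<in> {a..b}"
    show "((\<lambda>x. \<phi> x - f x) has_real_derivative \<phi>' x - f' x) (at x within S)"
      using \<phi>'[OF \<open>x \<in> {a..b}\<close>] f'[OF \<open>x \<in> {a..b}\<close>] by (rule DERIV_diff)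
    show "0 \<le> \<phi>' x - f' x"
      using bound[OF \<open>x \<in> {a..b}\<close>] by (simp add: abs_le_iff)
  qed
  moreover have "\<phi> a + f a \<le> \<phi> b + f b"
  proof (rule DERIV_nonneg_imp_increasing_within[OF \<open>a \<le> b\<close> \<open>{a..b} \<subseteq> S\<close>,
        where f = "\<lambda>x. \<phi> x + f x" and f' = "\<lambda>x. \<phi>' x + f' x"])
    fix x assume "x \<in> {a..b}"
    show "((\<lambda>x. \<phi> x + f x) has_real_derivative \<phi>' x + f' x) (at x within S)"
      using \<phi>'[OF \<open>x \<in> {a..b}\<close>] f'[OF \<open>x \<in> {a..b}\<close>] by (rule DERIV_add)
    show "0 \<le> \<phi>' x + f' x"
      using bound[OF \<open>x \<in> {a..b}\<close>] by (simp add: abs_le_iff)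
  qed
  ultimately show ?thesis
    by (simp add: abs_le_iff)
qed

lemma DERIV_proportional_imp_nonzero:
  fixes f g :: "real \<Rightarrow> real"
  assumes deriv: "\<And>t. 0 \<le> t \<Longrightarrow> (f has_real_derivative f t * g t) (at t within {0..})"
    and g_cont: "continuous_on {0..} g" and "f 0 \<noteq> 0" and "0 \<le> t"
  shows "f t \<noteq> 0"
proof -
  have "bounded (g ` {0..t})"
    by (intro compact_imp_bounded compact_continuous_image continuous_on_subset[OF g_cont]) auto
  then obtain K where K: "\<And>s. s \<in> {0..t} \<Longrightarrow> \<bar>g s\<bar> \<le> K"
    unfolding bounded_iff real_norm_def by blast
  have "(\<lambda>s. (f s)\<^sup>2 * exp (2 * K * s)) 0 \<le> (\<lambda>s. (f s)\<^sup>2 * exp (2 * K * s)) t"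
  proof (rule DERIV_nonneg_imp_increasing_within[where S = "{0..}"
        and f = "\<lambda>s. (f s)\<^sup>2 * exp (2 * K * s)"
        and f' = "\<lambda>s. 2 * (f s)\<^sup>2 * exp (2 * K * s) * (g s + K)"])
    fix s assume s: "s \<in> {0..t}"
    show "((\<lambda>s. (f s)\<^sup>2 * exp (2 * K * s)) has_real_derivative
        2 * (f s)\<^sup>2 * exp (2 * K * s) * (g s + K)) (at s within {0..})"
      using s by (auto intro!: derivative_eq_intros deriv simp: algebra_simps power2_eq_square)
    show "0 \<le> 2 * (f s)\<^sup>2 * exp (2 * K * s) * (g s + K)"
      using K[OF s] by simp
  qed (use \<open>0 \<le> t\<close> in auto)
  then show ?thesis
    using \<open>f 0 \<noteq> 0\<close> by auto
qed

lemma DERIV_proportional_imp_pos: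
  fixes f g :: "real \<Rightarrow> real"
  assumes deriv: "\<And>t. 0 \<le> t \<Longrightarrow> (f has_real_derivative f t * g t) (at t within {0..})"
    and g_cont: "continuous_on {0..} g" and "0 < f 0" and "0 \<le> t"
  shows "0 < f t"
proof (rule ccontr)
  assume "\<not> 0 < f t"
  moreover have "continuous_on {0..t} f"
    using DERIV_continuous_on[OF deriv] by (rule continuous_on_subset) auto
  ultimately obtain s where "0 \<le> s" "s \<le> t" "f s = 0"
    using IVT2'[of f t 0 0] \<open>0 < f 0\<close> \<open>0 \<le> t\<close> by force
  then show False
    using DERIV_proportional_imp_nonzero[OF deriv g_cont] \<open>0 < f 0\<close> by force
qed

lemma DERIV_logarithmic_imp_eq_ln:
  fixes x z h :: "real \<Rightarrow> real"
  assumes x': "\<And>t. 0 \<le> t \<Longrightarrow> (x has_real_derivative h t) (at t within {0..})"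
    and z': "\<And>t. 0 \<le> t \<Longrightarrow> (z has_real_derivative z t * h t) (at t within {0..})"
    and pos: "\<And>t. 0 \<le> t \<Longrightarrow> 0 < z t" and "x 0 = ln (z 0)" and "0 \<le> t"
  shows "x t = ln (z t)"
proof -
  have "\<exists>c. \<forall>s\<in>{0..}. x s - ln (z s) = c"
  proof (rule has_field_derivative_zero_constant)
    fix s :: real assume "s \<in> {0..}"
    then have "0 < z s"
      using pos by simp
    then show "((\<lambda>s. x s - ln (z s)) has_field_derivative 0) (at s within {0..})"
      using x' z' \<open>s \<in> {0..}\<close> by (auto intro!: derivative_eq_intros)
  qed simp
  then obtain c where c: "\<And>s. 0 \<le> s \<Longrightarrow> x s - ln (z s) = c"
    by auto
  have "c = 0"
    using c[of 0] \<open>x 0 = ln (z 0)\<close> by simp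
  then show ?thesis
    using c[OF \<open>0 \<le> t\<close>] by simp
qed

lemma relaxation_exp_bound:
  fixes w e :: "real \<Rightarrow> real"
  assumes deriv: "\<And>t. 0 \<le> t \<Longrightarrow> (w has_real_derivative e t - w t) (at t within {0..})"
    and e_bound: "\<And>t. 0 \<le> t \<Longrightarrow> \<bar>e t\<bar> \<le> C * exp (- r * t)"
    and "r < 1" and "0 \<le> t"
  shows "\<bar>w t\<bar> \<le> (\<bar>w 0\<bar> + C / (1 - r)) * exp (- r * t)"
proof -
  have "0 \<le> C"
    using e_bound[of 0] by simp
  define G where "G s = C / (1 - r) * exp ((1 - r) * s)" for s
  have "\<bar>exp t * w t - exp 0 * w 0\<bar> \<le> G t - G 0"
  proof (rule abs_diff_le_of_DERIV_bound[where S = "{0..}"])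
    fix s :: real assume s: "s \<in> {0..t}"
    show "((\<lambda>s. exp s * w s) has_real_derivative exp s * e s) (at s within {0..})"
      using s by (auto intro!: derivative_eq_intros deriv simp: algebra_simps)
    show "(G has_real_derivative C * exp ((1 - r) * s)) (at s within {0..})"
      unfolding G_def using \<open>r < 1\<close> by (auto intro!: derivative_eq_intros)
    have "\<bar>exp s * e s\<bar> \<le> exp s * (C * exp (- r * s))"
      using e_bound[of s] s by (simp add: abs_mult)
    also have "\<dots> = C * exp ((1 - r) * s)"
      by (simp add: algebra_simps flip: exp_add)
    finally show "\<bar>exp s * e s\<bar> \<le> C * exp ((1 - r) * s)" .
  qed (use \<open>0 \<le> t\<close> in auto)
  moreover have "0 \<le> G 0"
    unfolding G_def using \<open>0 \<le> C\<close> \<open>r < 1\<close> by simp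
  ultimately have "exp t * \<bar>w t\<bar> \<le> \<bar>w 0\<bar> + G t"
    by (simp add: abs_mult)
  then have "\<bar>w t\<bar> \<le> exp (- t) * (\<bar>w 0\<bar> + G t)"
    by (simp add: exp_minus field_simps)
  also have "\<dots> = exp (- t) * \<bar>w 0\<bar> + C / (1 - r) * exp (- t + (1 - r) * t)"
    unfolding G_def exp_add by (simp add: algebra_simps)
  also have "\<dots> = exp (- t) * \<bar>w 0\<bar> + C / (1 - r) * exp (- r * t)"
    by (simp add: algebra_simps)
  also have "\<dots> \<le> (\<bar>w 0\<bar> + C / (1 - r)) * exp (- r * t)"
  proof -
    have "r * t \<le> 1 * t"
      using \<open>r < 1\<close> \<open>0 \<le> t\<close> by (intro mult_right_mono) auto
    then have "exp (- t) * \<bar>w 0\<bar> \<le> exp (- r * t) * \<bar>w 0\<bar>"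
      by (intro mult_right_mono) auto
    then show ?thesis
      by (simp add: algebra_simps)
  qed
  finally show ?thesis .
qed

lemma continuous_on_pos_tendsto_pos_imp_bounded_below:
  fixes f :: "real \<Rightarrow> real"
  assumes cont: "continuous_on {0..} f" and pos: "\<And>t. 0 \<le> t \<Longrightarrow> 0 < f t"
    and lim: "(f \<longlongrightarrow> L) at_top" and "0 < L"
  obtains m where "0 < m" and "\<And>t. 0 \<le> t \<Longrightarrow> m \<le> f t"
proof -
  obtain T where T: "\<And>t. T \<le> t \<Longrightarrow> L / 2 < f t"
    using order_tendstoD(1)[OF lim, of "L / 2"] \<open>0 < L\<close> by (auto simp: eventually_at_top_linorder)
  obtain t\<^sub>0 where t\<^sub>0: "t\<^sub>0 \<in> {0..max T 0}" and min: "\<And>t. t \<in> {0..max T 0} \<Longrightarrow> f t\<^sub>0 \<le> f t"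
    using continuous_attains_inf[of "{0..max T 0}" f] continuous_on_subset[OF cont] by auto
  show ?thesis
  proof (rule that[of "min (L / 2) (f t\<^sub>0)"])
    show "0 < min (L / 2) (f t\<^sub>0)"
      using pos[of t\<^sub>0] t\<^sub>0 \<open>0 < L\<close> by auto
    fix t :: real assume "0 \<le> t"
    then show "min (L / 2) (f t\<^sub>0) \<le> f t"
      using T[of t] min[of t] by (cases "T \<le> t") (auto simp: min_le_iff_disj)
  qed
qed

lemma abs_ln_diff_le:
  fixes u v m :: real
  assumes "0 < m" and "m \<le> u" and "m \<le> v"
  shows "\<bar>ln u - ln v\<bar> \<le> \<bar>u - v\<bar> / m"
proof -
  have ln_diff: "ln p - ln q \<le> (p - q) / m" if "m \<le> q" and "q \<le> p" for p q
  proof -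
    have "ln p - ln q = ln (p / q)"
      using \<open>0 < m\<close> that by (simp add: ln_div)
    also have "\<dots> \<le> p / q - 1"
      using \<open>0 < m\<close> that by (intro ln_le_minus_one) auto
    also have "\<dots> = (p - q) / q"
      using \<open>0 < m\<close> that by (simp add: field_simps)
    also have "\<dots> \<le> (p - q) / m"
      using \<open>0 < m\<close> that by (intro divide_left_mono) auto
    finally show ?thesis .
  qed
  show ?thesis
    using ln_diff[of v u] ln_diff[of u v] assms
    by (cases "v \<le> u") (auto simp: abs_if)
qed

lemma converges_at_rate_imp_tendsto:
  assumes "converges_at_rate f L \<rho>" and "0 < \<rho>"
  shows "(f \<longlongrightarrow> L) at_top"
proof -
  have "\<rho> / 2 < \<rho>"
    using \<open>0 < \<rho>\<close> by simp
  then obtain C where C: "\<And>t. 0 \<le> t \<Longrightarrow> \<bar>f t - L\<bar> \<le> C * exp (- (\<rho> / 2) * t)"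
    using assms(1) unfolding converges_at_rate_def by blast
  have "filterlim (\<lambda>t. - (\<rho> / 2) * t) at_bot at_top"
    using \<open>0 < \<rho>\<close> by (intro filterlim_tendsto_neg_mult_at_bot[OF tendsto_const] filterlim_ident) auto
  then have "((\<lambda>t. exp (- (\<rho> / 2) * t)) \<longlongrightarrow> 0) at_top"
    by (rule filterlim_compose[OF exp_at_bot])
  then have bound_lim: "((\<lambda>t. C * exp (- (\<rho> / 2) * t)) \<longlongrightarrow> 0) at_top"
    by (rule tendsto_mult_right_zero)
  have "\<forall>\<^sub>F t in at_top. norm (f t - L) \<le> C * exp (- (\<rho> / 2) * t)"
    unfolding real_norm_def using eventually_ge_at_top[of 0] by eventually_elim (rule C)
  then show ?thesis
    by (rule LIM_zero_cancel[OF Lim_null_comparison[OF _ bound_lim]])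
qed

lemma converges_at_rate_dominated:
  assumes dom: "\<And>t. 0 \<le> t \<Longrightarrow> \<bar>g t - M\<bar> \<le> K * \<bar>f t - L\<bar>"
    and f_rate: "converges_at_rate f L \<rho>"
  shows "converges_at_rate g M \<rho>"
  unfolding converges_at_rate_def
proof (intro allI impI)
  fix r assume "r < \<rho>"
  then obtain C where C: "\<And>t. 0 \<le> t \<Longrightarrow> \<bar>f t - L\<bar> \<le> C * exp (- r * t)"
    using f_rate unfolding converges_at_rate_def by auto
  have "\<bar>g t - M\<bar> \<le> (\<bar>K\<bar> * C) * exp (- r * t)" if "0 \<le> t" for t
  proof -
    have "\<bar>g t - M\<bar> \<le> \<bar>K\<bar> * \<bar>f t - L\<bar>"
      using dom[OF that] by (meson abs_ge_self abs_ge_zero mult_right_mono order_trans)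
    also have "\<dots> \<le> \<bar>K\<bar> * (C * exp (- r * t))"
      using C[OF that] by (simp add: mult_left_mono)
    finally show ?thesis
      by (simp add: mult.assoc)
  qed
  then show "\<exists>C. \<forall>t\<ge>0. \<bar>g t - M\<bar> \<le> C * exp (- r * t)"
    by blast
qed

lemma converges_at_rate_relaxation:
  assumes deriv: "\<And>t. 0 \<le> t \<Longrightarrow> (u has_real_derivative b t - u t) (at t within {0..})"
    and b_rate: "converges_at_rate b L \<rho>"
  shows "converges_at_rate u L (min \<rho> 1)"
  unfolding converges_at_rate_def
proof (intro allI impI)
  fix r assume r: "r < min \<rho> 1"
  then obtain C where C: "\<And>t. 0 \<le> t \<Longrightarrow> \<bar>b t - L\<bar> \<le> C * exp (- r * t)"
    using b_rate unfolding converges_at_rate_def by auto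
  have "\<bar>u t - L\<bar> \<le> (\<bar>u 0 - L\<bar> + C / (1 - r)) * exp (- r * t)" if "0 \<le> t" for t
  proof (rule relaxation_exp_bound[where e = "\<lambda>t. b t - L"])
    fix s :: real assume "0 \<le> s"
    show "((\<lambda>t. u t - L) has_real_derivative (b s - L) - (u s - L)) (at s within {0..})"
      using deriv[OF \<open>0 \<le> s\<close>] by (auto intro!: derivative_eq_intros)
  qed (use C r that in auto)
  then show "\<exists>C. \<forall>t\<ge>0. \<bar>u t - L\<bar> \<le> C * exp (- r * t)"
    by blast
qed

lemma converges_at_rate_inverse:
  fixes f :: "real \<Rightarrow> real"
  assumes cont: "continuous_on {0..} f" and pos: "\<And>t. 0 \<le> t \<Longrightarrow> 0 < f t"
    and "0 < L" and "0 < \<rho>" and rate: "converges_at_rate f L \<rho>"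
  shows "converges_at_rate (\<lambda>t. 1 / f t) (1 / L) \<rho>"
proof -
  obtain m where "0 < m" and m: "\<And>t. 0 \<le> t \<Longrightarrow> m \<le> f t"
    using continuous_on_pos_tendsto_pos_imp_bounded_below[OF cont pos
        converges_at_rate_imp_tendsto[OF rate \<open>0 < \<rho>\<close>] \<open>0 < L\<close>] by blast
  show ?thesis
  proof (rule converges_at_rate_dominated[OF _ rate])
    fix t :: real assume "0 \<le> t"
    then have "\<bar>1 / f t - 1 / L\<bar> = \<bar>f t - L\<bar> / (f t * L)"
      using pos[of t] \<open>0 < L\<close> by (simp add: field_simps abs_minus_commute)
    also have "\<dots> \<le> \<bar>f t - L\<bar> / (m * L)"
      using m[OF \<open>0 \<le> t\<close>] \<open>0 < m\<close> \<open>0 < L\<close> by (intro divide_left_mono mult_right_mono) auto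
    finally show "\<bar>1 / f t - 1 / L\<bar> \<le> 1 / (m * L) * \<bar>f t - L\<bar>"
      by simp
  qed
qed

lemma converges_at_rate_ln:
  fixes f :: "real \<Rightarrow> real"
  assumes cont: "continuous_on {0..} f" and pos: "\<And>t. 0 \<le> t \<Longrightarrow> 0 < f t"
    and "0 < L" and "0 < \<rho>" and rate: "converges_at_rate f L \<rho>"
  shows "converges_at_rate (\<lambda>t. ln (f t)) (ln L) \<rho>"
proof -
  obtain m where "0 < m" and m: "\<And>t. 0 \<le> t \<Longrightarrow> m \<le> f t"
    using continuous_on_pos_tendsto_pos_imp_bounded_below[OF cont pos
        converges_at_rate_imp_tendsto[OF rate \<open>0 < \<rho>\<close>] \<open>0 < L\<close>] by blast
  show ?thesis
  proof (rule converges_at_rate_dominated[OF _ rate])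
    fix t :: real assume "0 \<le> t"
    then have "\<bar>ln (f t) - ln L\<bar> \<le> \<bar>f t - L\<bar> / min m L"
      using m[of t] \<open>0 < m\<close> \<open>0 < L\<close> by (intro abs_ln_diff_le) auto
    then show "\<bar>ln (f t) - ln L\<bar> \<le> 1 / min m L * \<bar>f t - L\<bar>"
      by simp
  qed
qed

lemma converges_at_rate_logistic:
  fixes f c :: "real \<Rightarrow> real"
  assumes deriv: "\<And>t. 0 \<le> t \<Longrightarrow> (f has_real_derivative f t * (1 - c t * f t)) (at t within {0..})"
    and pos: "\<And>t. 0 \<le> t \<Longrightarrow> 0 < f t"
    and "0 < L" and "0 < \<rho>" and c_rate: "converges_at_rate c L \<rho>"
  shows "converges_at_rate f (1 / L) (min \<rho> 1)"
proof -
  note nonzero = pos[THEN dual_order.strict_implies_not_eq]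
  have "continuous_on {0..} (\<lambda>t. 1 / f t)"
    using DERIV_continuous_on[OF deriv] nonzero by (auto intro!: continuous_intros)
  moreover have "converges_at_rate (\<lambda>t. 1 / f t) L (min \<rho> 1)"
    by (rule converges_at_rate_relaxation[OF _ c_rate])
      (auto intro!: derivative_eq_intros deriv simp: nonzero field_simps power2_eq_square)
  ultimately show ?thesis
    using converges_at_rate_inverse[where f = "\<lambda>t. 1 / f t"] pos \<open>0 < L\<close> \<open>0 < \<rho>\<close> by simp
qed

theorem lemma4p3:
  fixes a y x z :: "real \<Rightarrow> real" and a_star \<rho>a :: real
  assumes a_cont: "continuous_on {0..} a"
    and a_pos: "\<And>t. t \<ge> 0 \<Longrightarrow> a t > 0"
    and a_star_pos: "a_star > 0"
    and rho_pos: "\<rho>a > 0"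
    and a_rate: "converges_at_rate a a_star \<rho>a"
    and y_ode: "\<And>t. t \<ge> 0 \<Longrightarrow> (y has_real_derivative y t * (1 - a t * y t)) (at t within {0..})"
    and x_ode: "\<And>t. t \<ge> 0 \<Longrightarrow> (x has_real_derivative 1 - y t * z t) (at t within {0..})"
    and z_ode: "\<And>t. t \<ge> 0 \<Longrightarrow> (z has_real_derivative z t * (1 - y t * z t)) (at t within {0..})"
    and y0: "y 0 > 0" and z0: "z 0 > 0" and x0: "x 0 = ln (z 0)"
  shows "(y \<longlongrightarrow> 1 / a_star) at_top \<and>
         (z \<longlongrightarrow> a_star) at_top \<and>
         (\<forall>t\<ge>0. x t = ln (z t)) \<and>
         converges_at_rate x (ln a_star) (min \<rho>a 1)"
proof -
  let ?\<rho> = "min \<rho>a 1"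
  have "0 < ?\<rho>"
    using rho_pos by simp
  have y_cont: "continuous_on {0..} y" and z_cont: "continuous_on {0..} z"
    by (auto intro!: DERIV_continuous_on y_ode z_ode)
  have y_pos: "0 < y t" if "0 \<le> t" for t
    by (rule DERIV_proportional_imp_pos[OF y_ode _ y0 that])
      (auto intro!: continuous_intros a_cont y_cont)
  have z_pos: "0 < z t" if "0 \<le> t" for t
    by (rule DERIV_proportional_imp_pos[OF z_ode _ z0 that])
      (auto intro!: continuous_intros y_cont z_cont)
  have x_eq: "\<forall>t\<ge>0. x t = ln (z t)"
    using DERIV_logarithmic_imp_eq_ln[OF x_ode z_ode z_pos x0] by blast
  have y_rate: "converges_at_rate y (1 / a_star) ?\<rho>"
    by (rule converges_at_rate_logistic[OF y_ode y_pos a_star_pos rho_pos a_rate])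
  have z_rate: "converges_at_rate z a_star ?\<rho>"
    using converges_at_rate_logistic[OF z_ode z_pos _ \<open>0 < ?\<rho>\<close> y_rate] a_star_pos by simp
  have "converges_at_rate (\<lambda>t. ln (z t)) (ln a_star) ?\<rho>"
    by (rule converges_at_rate_ln[OF z_cont z_pos a_star_pos \<open>0 < ?\<rho>\<close> z_rate])
  then have "converges_at_rate x (ln a_star) ?\<rho>"
    by (rule converges_at_rate_dominated[where K = 1, rotated]) (simp add: x_eq)
  then show ?thesis
    using x_eq converges_at_rate_imp_tendsto y_rate z_rate \<open>0 < ?\<rho>\<close> by blast
qed

end
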